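(* Let $p>0$ and let $(u_n)_{n\ge0}$ be a sequence in $E^1$ with partial sums $s_n=\sum_{k=0}^n u_k$. If the series $\sum u_n$ is $E_p$ summable to $\nu\in E^1$ and $\sqrt{n}\,D(u_n,\overline{0})\to0$ as $n\to\infty$, then $\sum u_n=\nu$, i.e. $D(s_n,\nu)\to0$.
   Context: $E^1$ denotes the set of fuzzy numbers: functions $u:\mathbb{R}\to[0,1]$ that are normal, fuzzy convex, upper semicontinuous, and have compact support $\overline{\{t:u(t)>0\}}$. For $\alpha\in(0,1]$ the $\alpha$-level set is $[u]_\alpha=\{t:u(t)\ge\alpha\}$ and $[u]_0=\overline{\{t:u(t)>0\}}$; each is a compact interval $[u^-_\alpha,u^+_\alpha]$. Addition and scalar multiplication are defined levelwise: $[u+v]_\alpha=[u^-_\alpha+v^-_\alpha,u^+_\alpha+v^+_\alpha]$ and $[ku]_\alpha=k[u]_\alpha$ for $k\in\mathbb{R}$. The metric is $D(u,v)=\sup_{\alpha\in[0,1]}\max\{|u^-_\alpha-v^-_\alpha|,|u^+_\alpha-v^+_\alpha|\}$. $\overline{0}$ is the fuzzy number equal to $1$ at $0$ and $0$ elsewhere. A series $\sum u_n$ of fuzzy numbers is $E_p$ summable to $\nu$ if its sequence of partial sums $(s_n)$ has Euler means $\frac{1}{(p+1)^n}\sum_{k=0}^n\binom{n}{k}p^{n-k}s_k$ converging to $\nu$ in $D$. *)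

theory Defs
  imports "HOL-Analysis.Analysis"
begin

definition level :: "(real \<Rightarrow> real) \<Rightarrow> real \<Rightarrow> real set" where
  "level u \<alpha> = (if \<alpha> = 0 then closure {t. u t > 0} else {t. \<alpha> \<le> u t})"

definition lowerE :: "(real \<Rightarrow> real) \<Rightarrow> real \<Rightarrow> real" where
  "lowerE u \<alpha> = Inf (level u \<alpha>)"

definition upperE :: "(real \<Rightarrow> real) \<Rightarrow> real \<Rightarrow> real" where
  "upperE u \<alpha> = Sup (level u \<alpha>)"

definition E1 :: "(real \<Rightarrow> real) set" where
  "E1 = {u. (\<forall>t. 0 \<le> u t \<and> u t \<le> 1)
          \<and> (\<exists>t. u t = 1)
          \<and> (\<forall>x y c. 0 \<le> c \<and> c \<le> 1 \<longrightarrow> min (u x) (u y) \<le> u (c * x + (1 - c) * y))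
          \<and> (\<forall>x \<epsilon>. \<epsilon> > 0 \<longrightarrow> (\<exists>\<delta>>0. \<forall>y. \<bar>y - x\<bar> < \<delta> \<longrightarrow> u y < u x + \<epsilon>))
          \<and> compact (closure {t. u t > 0})}"

(* levelwise addition: [u+v]_alpha = [u]_alpha + [v]_alpha *)
definition fplus :: "(real \<Rightarrow> real) \<Rightarrow> (real \<Rightarrow> real) \<Rightarrow> (real \<Rightarrow> real)" where
  "fplus u v = (\<lambda>t. Sup ({0} \<union> {\<alpha>. 0 < \<alpha> \<and> \<alpha> \<le> 1 \<and>
        (\<exists>a b. a \<in> level u \<alpha> \<and> b \<in> level v \<alpha> \<and> t = a + b)}))"

(* levelwise scalar multiplication: [k u]_alpha = k [u]_alpha *)
definition fscale :: "real \<Rightarrow> (real \<Rightarrow> real) \<Rightarrow> (real \<Rightarrow> real)" where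
  "fscale k u = (\<lambda>t. Sup ({0} \<union> {\<alpha>. 0 < \<alpha> \<and> \<alpha> \<le> 1 \<and>
        (\<exists>a. a \<in> level u \<alpha> \<and> t = k * a)}))"

definition fzero :: "real \<Rightarrow> real" where
  "fzero = (\<lambda>t. if t = 0 then 1 else 0)"

definition fdist :: "(real \<Rightarrow> real) \<Rightarrow> (real \<Rightarrow> real) \<Rightarrow> real" where
  "fdist u v = (SUP \<alpha>\<in>{0..1}. max \<bar>lowerE u \<alpha> - lowerE v \<alpha>\<bar> \<bar>upperE u \<alpha> - upperE v \<alpha>\<bar>)"

fun fsum_upto :: "(nat \<Rightarrow> real \<Rightarrow> real) \<Rightarrow> nat \<Rightarrow> (real \<Rightarrow> real)" where
  "fsum_upto w 0 = w 0"
| "fsum_upto w (Suc n) = fplus (fsum_upto w n) (w (Suc n))"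

definition psum :: "(nat \<Rightarrow> real \<Rightarrow> real) \<Rightarrow> nat \<Rightarrow> (real \<Rightarrow> real)" where
  "psum u n = fsum_upto u n"

definition euler_mean :: "real \<Rightarrow> (nat \<Rightarrow> real \<Rightarrow> real) \<Rightarrow> nat \<Rightarrow> (real \<Rightarrow> real)" where
  "euler_mean p s n = fsum_upto (\<lambda>k. fscale (real (n choose k) * p ^ (n - k) / (p + 1) ^ n) (s k)) n"

definition Ep_summable_to :: "real \<Rightarrow> (nat \<Rightarrow> real \<Rightarrow> real) \<Rightarrow> (real \<Rightarrow> real) \<Rightarrow> bool" where
  "Ep_summable_to p u \<nu> \<longleftrightarrow> (\<lambda>n. fdist (euler_mean p (psum u) n) \<nu>) \<longlonglongrightarrow> 0"

end

theory Submission
  imports Defs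
begin

text \<open>Levelwise, every fuzzy number in sight is a pair of real endpoint functions of \<open>\<alpha>\<close>, and
  \<open>D\<close> is the supremum over \<open>\<alpha>\<close> of the endpoint differences.  So it suffices to prove, uniformly in
  \<open>\<alpha>\<close>, a Tauberian estimate for real series whose terms are bounded by \<open>d\<^sub>j = D(u\<^sub>j, 0)\<close>.
  The Euler weights \<open>C(n,k) p\<^sup>n\<^sup>-\<^sup>k / (p+1)\<^sup>n\<close> form a binomial distribution with mean \<open>n/(p+1)\<close>
  and variance \<open>O(n)\<close>; taking \<open>n \<approx> m(p+1)\<close> centres it at \<open>m\<close>.  Then
  \<open>|s\<^sub>m - E\<^sub>n| \<le> \<Sum>\<^sub>k w\<^sub>k \<Sum>\<^bsub>j between k and m\<^esub> d\<^sub>j\<close>, and since \<open>d\<^sub>j = o(1/\<surd>j)\<close> the inner sum is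
  \<open>o((k-m)\<^sup>2/m + 1)\<close>, which averages to \<open>o(1)\<close> against a distribution of variance \<open>O(m)\<close>.
  Comparing \<open>s\<^sub>m\<close> with the Euler mean of index \<open>n\<close> and that mean with \<open>\<nu>\<close> finishes the proof.\<close>

section \<open>Euler weights\<close>

lemma sum_binomial_pow:
  fixes x :: real
  shows "(\<Sum>k\<le>n. real (n choose k) * x^(n-k)) = (x+1)^n"
  using binomial_ring[of 1 x n] by (simp add: add.commute)

lemma sum_binomial_pow_times_index:
  fixes x :: real
  shows "(\<Sum>k\<le>n. real k * real (n choose k) * x^(n-k)) = real n * (x+1)^(n-1)"
proof (cases n)
  case (Suc m)
  have "(\<Sum>k\<le>Suc m. real k * real (Suc m choose k) * x^(Suc m-k))
      = (\<Sum>i\<le>m. real (Suc i) * real (Suc m choose Suc i) * x^(m-i))"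
    by (subst sum.atMost_Suc_shift) simp
  also have "\<dots> = (\<Sum>i\<le>m. real (Suc m) * (real (m choose i) * x^(m-i)))"
  proof (rule sum.cong)
    fix i
    have "real (Suc i) * real (Suc m choose Suc i) = real (Suc m) * real (m choose i)"
      using Suc_times_binomial[of i m] by (metis of_nat_mult)
    then show "real (Suc i) * real (Suc m choose Suc i) * x^(m-i)
        = real (Suc m) * (real (m choose i) * x^(m-i))" by simp
  qed simp
  also have "\<dots> = real (Suc m) * (x+1)^m"
    by (simp add: sum_distrib_left[symmetric] sum_binomial_pow)
  finally show ?thesis using Suc by simp
qed simp

lemma sum_binomial_pow_times_falling:
  fixes x :: real
  shows "(\<Sum>k\<le>n. real k * (real k - 1) * real (n choose k) * x^(n-k))
    = real n * (real n - 1) * (x+1)^(n-2)"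
proof (cases "n \<ge> 2")
  case True
  then obtain m where n: "n = Suc (Suc m)" by (metis add_2_eq_Suc le_Suc_ex)
  have "(\<Sum>k\<le>n. real k * (real k - 1) * real (n choose k) * x^(n-k))
      = (\<Sum>i\<le>m. real (Suc (Suc i)) * real (Suc i) * real (n choose Suc (Suc i)) * x^(m-i))"
    unfolding n by (simp only: sum.atMost_Suc_shift) (simp del: binomial_Suc_Suc)
  also have "\<dots> = (\<Sum>i\<le>m. real n * real (Suc m) * (real (m choose i) * x^(m-i)))"
  proof (rule sum.cong)
    fix i
    have a: "real (Suc (Suc i)) * real (n choose Suc (Suc i)) = real n * real (Suc m choose Suc i)"
      unfolding n using Suc_times_binomial[of "Suc i" "Suc m"] by (metis of_nat_mult)
    have b: "real (Suc i) * real (Suc m choose Suc i) = real (Suc m) * real (m choose i)"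
      using Suc_times_binomial[of i m] by (metis of_nat_mult)
    have "real (Suc (Suc i)) * real (Suc i) * real (n choose Suc (Suc i))
        = real n * (real (Suc i) * real (Suc m choose Suc i))"
      using a by (simp only: ac_simps)
    also have "\<dots> = real n * real (Suc m) * real (m choose i)" using b by simp
    finally show "real (Suc (Suc i)) * real (Suc i) * real (n choose Suc (Suc i)) * x^(m-i)
        = real n * real (Suc m) * (real (m choose i) * x^(m-i))" by simp
  qed simp
  also have "\<dots> = real n * real (Suc m) * (x+1)^m"
    by (simp add: sum_distrib_left[symmetric] sum_binomial_pow)
  finally show ?thesis using n by simp
next
  case False
  then have "n = 0 \<or> n = 1" by auto
  then show ?thesis by (auto simp: atMost_Suc)
qed

text \<open>The Euler weights of order \<open>n\<close> are the Binomial(\<open>n\<close>, \<open>1/(p+1)\<close>) probabilities; hence they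
  sum to one, have mean \<open>n/(p+1)\<close> and variance \<open>n p/(p+1)\<^sup>2\<close>.\<close>

definition euler_weight :: "real \<Rightarrow> nat \<Rightarrow> nat \<Rightarrow> real" where
  "euler_weight p n k = real (n choose k) * p^(n-k) / (p+1)^n"

lemma euler_weight_nonneg: "0 \<le> p \<Longrightarrow> 0 \<le> euler_weight p n k"
  by (simp add: euler_weight_def)

lemma euler_weight_sum: "0 \<le> p \<Longrightarrow> (\<Sum>k\<le>n. euler_weight p n k) = 1"
  using sum_binomial_pow[of n p] by (simp add: euler_weight_def sum_divide_distrib[symmetric])

lemma euler_weight_mean:
  assumes p: "0 \<le> p"
  shows "(\<Sum>k\<le>n. euler_weight p n k * real k) = real n / (p+1)"
proof -
  have "(\<Sum>k\<le>n. euler_weight p n k * real k)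
      = (\<Sum>k\<le>n. real k * real (n choose k) * p^(n-k)) / (p+1)^n"
    by (simp add: euler_weight_def sum_divide_distrib[symmetric] algebra_simps)
  also have "\<dots> = real n * (p+1)^(n-1) / (p+1)^n" by (simp add: sum_binomial_pow_times_index)
  also have "\<dots> = real n / (p+1)"
  proof (cases n)
    case (Suc k)
    have "(p+1)^k \<noteq> 0" using p by simp
    then show ?thesis using Suc p by (simp only: power_Suc) simp
  qed simp
  finally show ?thesis .
qed

lemma euler_weight_factorial_moment:
  assumes p: "0 \<le> p"
  shows "(\<Sum>k\<le>n. euler_weight p n k * (real k * (real k - 1))) = real n * (real n - 1) / (p+1)^2"
proof -
  have "(\<Sum>k\<le>n. euler_weight p n k * (real k * (real k - 1)))
      = (\<Sum>k\<le>n. real k * (real k - 1) * real (n choose k) * p^(n-k)) / (p+1)^n"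
    by (simp add: euler_weight_def sum_divide_distrib[symmetric] algebra_simps)
  also have "\<dots> = real n * (real n - 1) * (p+1)^(n-2) / (p+1)^n"
    by (simp add: sum_binomial_pow_times_falling)
  also have "\<dots> = real n * (real n - 1) / (p+1)^2"
  proof (cases "n \<ge> 2")
    case True
    then obtain m where "n = m + 2" by (metis le_add_diff_inverse2)
    then show ?thesis using p by (simp add: power_add power2_eq_square)
  next
    case False
    then have "n = 0 \<or> n = 1" by auto
    then show ?thesis by auto
  qed
  finally show ?thesis .
qed

lemma euler_weight_second_moment:
  assumes p: "0 \<le> p"
  shows "(\<Sum>k\<le>n. euler_weight p n k * (real k - x)^2)
    = (real n / (p+1) - x)^2 + real n / (p+1) * (1 - 1 / (p+1))"
proof -
  have "euler_weight p n k * (real k - x)^2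
      = euler_weight p n k * (real k * (real k - 1)) + (1 - 2*x) * (euler_weight p n k * real k)
        + x^2 * euler_weight p n k" for k
    by (simp add: algebra_simps power2_eq_square)
  then have "(\<Sum>k\<le>n. euler_weight p n k * (real k - x)^2)
      = real n * (real n - 1) / (p+1)^2 + (1 - 2*x) * (real n / (p+1)) + x^2"
    by (simp only: sum.distrib sum_distrib_left[symmetric] euler_weight_mean[OF p]
        euler_weight_factorial_moment[OF p] euler_weight_sum[OF p])
  also have "\<dots> = (real n / (p+1) - x)^2 + real n / (p+1) * (1 - 1 / (p+1))"
  proof -
    define a where "a = 1 / (p+1)"
    have "real n / (p+1) = real n * a" "real n * (real n - 1) / (p+1)^2 = real n * (real n - 1) * a^2"
      by (simp_all add: a_def power2_eq_square)
    then show ?thesis unfolding a_def[symmetric] by (simp add: algebra_simps power2_eq_square)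
  qed
  finally show ?thesis .
qed

text \<open>The index at which the mean \<open>n/(p+1)\<close> of the Euler weights first reaches \<open>m\<close>.\<close>

definition euler_index :: "real \<Rightarrow> nat \<Rightarrow> nat" where
  "euler_index p m = nat \<lceil>real m * (p+1)\<rceil>"

lemma euler_index_bounds:
  assumes p: "0 \<le> p"
  shows "real m \<le> real (euler_index p m) / (p+1)" and "real (euler_index p m) / (p+1) \<le> real m + 1"
proof -
  have "real (euler_index p m) = real_of_int \<lceil>real m * (p+1)\<rceil>"
    using p unfolding euler_index_def by (simp add: ceiling_le_zero not_le)
  then have "real m * (p+1) \<le> real (euler_index p m)" "real (euler_index p m) \<le> real m * (p+1) + (p+1)"
    using p by linarith+
  then show "real m \<le> real (euler_index p m) / (p+1)" "real (euler_index p m) / (p+1) \<le> real m + 1"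
    using p by (simp_all add: field_simps)
qed

lemma filterlim_euler_index:
  assumes p: "0 \<le> p"
  shows "filterlim (euler_index p) at_top sequentially"
proof (rule filterlim_at_top_mono[OF filterlim_ident], rule always_eventually, rule allI)
  fix m
  have "real m \<le> real (euler_index p m) / (p+1)" by (rule euler_index_bounds(1)[OF p])
  also have "\<dots> \<le> real (euler_index p m)"
    using p mult_left_mono[of 1 "p+1" "real (euler_index p m)"] by (simp add: divide_le_eq)
  finally show "m \<le> euler_index p m" by simp
qed

lemma euler_weight_spread_le:
  assumes p: "0 \<le> p" and m: "1 \<le> m"
  shows "(\<Sum>k\<le>euler_index p m. euler_weight p (euler_index p m) k * (real k - real m)^2) \<le> 3 * real m"
proof -
  define y where "y = real (euler_index p m) / (p+1)"
  have y: "real m \<le> y" "y \<le> real m + 1" unfolding y_def using euler_index_bounds[OF p] by auto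
  have "(\<Sum>k\<le>euler_index p m. euler_weight p (euler_index p m) k * (real k - real m)^2)
      = (y - real m)^2 + y * (1 - 1 / (p+1))"
    unfolding y_def by (rule euler_weight_second_moment[OF p])
  also have "(y - real m)^2 \<le> 1" using y power_le_one[of "y - real m" 2] by simp
  also have "y * (1 - 1 / (p+1)) \<le> y" using p y by (simp add: mult_left_le)
  finally show ?thesis using y m by linarith
qed

section \<open>A Tauberian estimate for real series\<close>

lemma inverse_sqrt_le_sqrt_diff: "1 / sqrt (real (Suc b)) \<le> 2 * (sqrt (real (Suc b)) - sqrt (real b))"
proof -
  define x where "x = sqrt (real (Suc b))"
  define y where "y = sqrt (real b)"
  have x: "x > 0" and y: "0 \<le> y" "y \<le> x" by (auto simp: x_def y_def)
  have "1 = (x - y) * (x + y)" by (simp add: x_def y_def algebra_simps power2_eq_square[symmetric])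
  also have "\<dots> \<le> (x - y) * (2 * x)" using y by (intro mult_left_mono) auto
  finally have "1 \<le> 2 * (x - y) * x" by (simp add: algebra_simps)
  then have "1 / x \<le> 2 * (x - y)" using x by (simp add: pos_divide_le_eq)
  then show ?thesis by (simp add: x_def y_def)
qed

lemma sum_inverse_sqrt_le:
  "a \<le> b \<Longrightarrow> (\<Sum>j\<in>{a<..b}. 1 / sqrt (real j)) \<le> 2 * (sqrt (real b) - sqrt (real a))"
proof (induction b rule: dec_induct)
  case (step b)
  have "{a<..Suc b} = insert (Suc b) {a<..b}" using step by auto
  then show ?case using inverse_sqrt_le_sqrt_diff[of b] step by simp
qed simp

lemma sqrt_diff_le_divide_sqrt:
  assumes "a \<le> b" "0 < b"
  shows "sqrt (real b) - sqrt (real a) \<le> (real b - real a) / sqrt (real b)"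
proof -
  have "sqrt (real a) * sqrt (real a) \<le> sqrt (real a) * sqrt (real b)"
    using assms by (intro mult_left_mono) auto
  then have "(sqrt (real b) - sqrt (real a)) * sqrt (real b) \<le> real b - real a"
    by (simp add: algebra_simps)
  then show ?thesis using assms by (simp add: le_divide_eq)
qed

lemma sum_between_le:
  assumes d: "\<forall>j\<in>{min k m<..max k m}. d j \<le> \<beta> / sqrt (real j)" and \<beta>: "0 \<le> \<beta>" and m: "0 < m"
  shows "(\<Sum>j\<in>{min k m<..max k m}. d j) \<le> 2 * \<beta> * \<bar>real k - real m\<bar> / sqrt (real m)"
proof -
  define a where "a = min k m"
  define b where "b = max k m"
  have ab: "a \<le> b" "m \<le> b" "0 < b" using m by (auto simp: a_def b_def)
  have "(\<Sum>j\<in>{a<..b}. d j) \<le> (\<Sum>j\<in>{a<..b}. \<beta> * (1 / sqrt (real j)))"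
    using d by (intro sum_mono) (auto simp: a_def b_def)
  also have "\<dots> = \<beta> * (\<Sum>j\<in>{a<..b}. 1 / sqrt (real j))" by (simp add: sum_distrib_left)
  also have "\<dots> \<le> \<beta> * (2 * ((real b - real a) / sqrt (real b)))"
    using \<beta> order_trans[OF sum_inverse_sqrt_le[OF ab(1)] mult_left_mono[OF sqrt_diff_le_divide_sqrt[OF ab(1,3)]]]
    by (intro mult_left_mono) auto
  also have "\<dots> \<le> \<beta> * (2 * ((real b - real a) / sqrt (real m)))"
    using \<beta> ab m by (intro mult_left_mono divide_left_mono) auto
  also have "real b - real a = \<bar>real k - real m\<bar>" by (auto simp: a_def b_def)
  finally show ?thesis by (simp add: a_def b_def algebra_simps)
qed

lemma le_power2_plus_one:
  fixes t :: real
  shows "t \<le> t^2 + 1"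
proof -
  have "2 * t \<le> t^2 + 1" using zero_le_power2[of "t - 1"] by (simp add: power2_diff)
  then show ?thesis using zero_le_power2[of t] by linarith
qed

text \<open>With \<open>\<surd>j d\<^sub>j \<le> B\<close> for all \<open>j\<close> and \<open>\<le> \<epsilon>\<close> for \<open>j \<ge> J\<close>: for \<open>k \<ge> m/2\<close> the \<open>\<epsilon>\<close>-bound applies
  and \<open>|x|/\<surd>m \<le> x\<^sup>2/m + 1\<close>; for \<open>k < m/2\<close> the crude bound suffices because \<open>|k - m| > m/2\<close>.\<close>

lemma sum_between_le_quadratic:
  assumes d: "\<forall>j. sqrt (real j) * d j \<le> B" and B: "0 < B"
    and J: "\<forall>j\<ge>J. sqrt (real j) * d j \<le> \<epsilon>" and \<epsilon>: "0 < \<epsilon>"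
    and m: "2 * J \<le> m" "1 \<le> m"
  shows "(\<Sum>j\<in>{min k m<..max k m}. d j)
     \<le> (2 * \<epsilon> / real m + 4 * B / (real m * sqrt (real m))) * (real k - real m)^2 + 2 * \<epsilon>"
proof -
  define x where "x = real k - real m"
  define s where "s = sqrt (real m)"
  have s: "0 < s" "s^2 = real m" using m by (auto simp: s_def)
  have inv_sqrt: "d j \<le> c / sqrt (real j)" if "sqrt (real j) * d j \<le> c" "0 < j" for j c
    using that by (simp add: le_divide_eq mult.commute)
  have nonneg: "0 \<le> 4 * B / (real m * sqrt (real m)) * x^2" "0 \<le> 2 * \<epsilon> / real m * x^2"
    using B \<epsilon> m by auto
  show ?thesis
  proof (cases "m \<le> 2 * k")
    case True
    have "d j \<le> \<epsilon> / sqrt (real j)" if j: "j \<in> {min k m<..max k m}" for j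
    proof (rule inv_sqrt)
      have "J \<le> j" using j True m(1) by auto
      then show "sqrt (real j) * d j \<le> \<epsilon>" using J by blast
    qed (use j in auto)
    then have "(\<Sum>j\<in>{min k m<..max k m}. d j) \<le> 2 * \<epsilon> * (\<bar>x\<bar> / s)"
      using sum_between_le[of k m d \<epsilon>] \<epsilon> m by (simp add: x_def s_def)
    also have "\<bar>x\<bar> / s \<le> (\<bar>x\<bar> / s)^2 + 1" by (rule le_power2_plus_one)
    also have "(\<bar>x\<bar> / s)^2 = x^2 / real m" using s by (simp add: power_divide)
    finally have "(\<Sum>j\<in>{min k m<..max k m}. d j) \<le> 2 * \<epsilon> / real m * x^2 + 2 * \<epsilon>"
      using \<epsilon> by (simp add: algebra_simps)
    then show ?thesis using nonneg unfolding x_def[symmetric] by (simp add: algebra_simps)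
  next
    case False
    have "d j \<le> B / sqrt (real j)" if "j \<in> {min k m<..max k m}" for j
      using that d by (intro inv_sqrt) auto
    then have "(\<Sum>j\<in>{min k m<..max k m}. d j) \<le> 2 * B * \<bar>x\<bar> / s"
      using sum_between_le[of k m d B] B m by (simp add: x_def s_def)
    also have "\<bar>x\<bar> \<le> 2 * x^2 / real m"
    proof -
      have "\<bar>x\<bar> * real m \<le> \<bar>x\<bar> * (2 * \<bar>x\<bar>)" using False by (intro mult_left_mono) (auto simp: x_def)
      then show ?thesis using m by (simp add: le_divide_eq power2_eq_square algebra_simps)
    qed
    finally have "(\<Sum>j\<in>{min k m<..max k m}. d j) \<le> 4 * B / (real m * sqrt (real m)) * x^2"
      using B s by (simp add: s_def divide_right_mono mult_left_mono)
    then show ?thesis using nonneg \<epsilon> unfolding x_def[symmetric] distrib_right by linarith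
  qed
qed

lemma euler_remainder_le:
  assumes p: "0 \<le> p" and d: "\<forall>j. 0 \<le> d j" "\<forall>j. sqrt (real j) * d j \<le> B" and B: "0 < B"
    and J: "\<forall>j\<ge>J. sqrt (real j) * d j \<le> \<epsilon>" and \<epsilon>: "0 < \<epsilon>"
    and m: "2 * J \<le> m" "1 \<le> m"
  shows "(\<Sum>k\<le>euler_index p m. euler_weight p (euler_index p m) k * (\<Sum>j\<in>{min k m<..max k m}. d j))
    \<le> 8 * \<epsilon> + 12 * B / sqrt (real m)"
proof -
  define n where "n = euler_index p m"
  define K where "K = 2 * \<epsilon> / real m + 4 * B / (real m * sqrt (real m))"
  have "0 \<le> K" using \<epsilon> B by (simp add: K_def)
  have "(\<Sum>k\<le>n. euler_weight p n k * (\<Sum>j\<in>{min k m<..max k m}. d j))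
      \<le> (\<Sum>k\<le>n. euler_weight p n k * (K * (real k - real m)^2 + 2 * \<epsilon>))"
    using sum_between_le_quadratic[OF d(2) B J \<epsilon> m] euler_weight_nonneg[OF p]
    by (intro sum_mono mult_left_mono) (auto simp: K_def)
  also have "\<dots> = K * (\<Sum>k\<le>n. euler_weight p n k * (real k - real m)^2) + 2 * \<epsilon> * (\<Sum>k\<le>n. euler_weight p n k)"
    by (simp add: algebra_simps sum.distrib sum_distrib_left)
  also have "\<dots> \<le> K * (3 * real m) + 2 * \<epsilon>"
    using euler_weight_spread_le[OF p m(2)] euler_weight_sum[OF p] \<open>0 \<le> K\<close>
    unfolding n_def by (simp add: mult_left_mono)
  also have "\<dots> = 8 * \<epsilon> + 12 * B / sqrt (real m)"
    using m by (simp add: K_def field_simps)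
  finally show ?thesis unfolding n_def .
qed

lemma euler_remainder_tendsto_0:
  assumes p: "0 \<le> p" and d: "\<forall>j. 0 \<le> d j" and lim: "(\<lambda>j. sqrt (real j) * d j) \<longlonglongrightarrow> 0"
  shows "(\<lambda>m. \<Sum>k\<le>euler_index p m. euler_weight p (euler_index p m) k * (\<Sum>j\<in>{min k m<..max k m}. d j))
    \<longlonglongrightarrow> 0"
proof (rule LIMSEQ_I)
  fix r :: real assume r: "0 < r"
  obtain B where B: "0 < B" "\<And>j. norm (sqrt (real j) * d j) \<le> B"
    using convergent_imp_Bseq[OF convergentI[OF lim]] by (auto simp: Bseq_def)
  define \<epsilon> where "\<epsilon> = r / 10"
  have \<epsilon>: "0 < \<epsilon>" using r by (simp add: \<epsilon>_def)
  obtain J where J: "\<forall>j\<ge>J. norm (sqrt (real j) * d j - 0) < \<epsilon>" using LIMSEQ_D[OF lim \<epsilon>] by blast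
  define M where "M = max (max (2 * J) 1) (nat \<lceil>(12 * B / \<epsilon>)^2\<rceil> + 1)"
  have "norm ((\<Sum>k\<le>euler_index p m. euler_weight p (euler_index p m) k * (\<Sum>j\<in>{min k m<..max k m}. d j)) - 0) < r"
    if m: "M \<le> m" for m
  proof -
    have "12 * B / \<epsilon> < sqrt (real m)"
    proof -
      have "(12 * B / \<epsilon>)^2 < real m" using m unfolding M_def by linarith
      then show ?thesis using B \<epsilon> real_less_rsqrt by blast
    qed
    then have "12 * B < sqrt (real m) * \<epsilon>" using \<epsilon> by (simp add: pos_divide_less_eq)
    then have "12 * B / sqrt (real m) < \<epsilon>" using m by (simp add: pos_divide_less_eq mult.commute M_def)
    moreover have "(\<Sum>k\<le>euler_index p m. euler_weight p (euler_index p m) k * (\<Sum>j\<in>{min k m<..max k m}. d j))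
        \<le> 8 * \<epsilon> + 12 * B / sqrt (real m)"
    proof (rule euler_remainder_le[OF p d(1) _ B(1) _ \<epsilon>])
      show "\<forall>j. sqrt (real j) * d j \<le> B" using B(2) by (auto intro: order_trans[OF abs_ge_self])
      show "\<forall>j\<ge>J. sqrt (real j) * d j \<le> \<epsilon>" using J by auto
      show "2 * J \<le> m" "1 \<le> m" using m by (auto simp: M_def)
    qed
    moreover have "0 \<le> (\<Sum>k\<le>euler_index p m. euler_weight p (euler_index p m) k * (\<Sum>j\<in>{min k m<..max k m}. d j))"
      using d euler_weight_nonneg[OF p] by (simp add: sum_nonneg)
    ultimately show ?thesis by (simp add: \<epsilon>_def)
  qed
  then show "\<exists>M. \<forall>m\<ge>M. norm ((\<Sum>k\<le>euler_index p m. euler_weight p (euler_index p m) k * (\<Sum>j\<in>{min k m<..max k m}. d j)) - 0) < r"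
    by blast
qed

lemma abs_diff_sums_atMost_le:
  fixes f :: "nat \<Rightarrow> real"
  shows "\<bar>(\<Sum>j\<le>m. f j) - (\<Sum>j\<le>k. f j)\<bar> \<le> (\<Sum>j\<in>{min k m<..max k m}. \<bar>f j\<bar>)"
proof -
  have split: "(\<Sum>j\<le>b. f j) = (\<Sum>j\<le>a. f j) + (\<Sum>j\<in>{a<..b}. f j)" if "a \<le> b" for a b
    using that by (metis ivl_disj_int_one(3) ivl_disj_un_one(3) sum.union_disjoint
        finite_atMost finite_greaterThanAtMost)
  show ?thesis
  proof (cases "k \<le> m")
    case True
    then show ?thesis using split[OF True] by (simp add: sum_abs)
  next
    case False
    then show ?thesis using split[of m k] by (simp add: sum_abs)
  qed
qed

lemma abs_partial_sum_minus_weighted_le: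
  fixes f :: "nat \<Rightarrow> real"
  assumes w: "\<And>k. 0 \<le> w k" "(\<Sum>k\<le>n. w k) = 1" and fd: "\<And>j. \<bar>f j\<bar> \<le> d j"
  shows "\<bar>(\<Sum>j\<le>m. f j) - (\<Sum>k\<le>n. w k * (\<Sum>j\<le>k. f j))\<bar>
    \<le> (\<Sum>k\<le>n. w k * (\<Sum>j\<in>{min k m<..max k m}. d j))"
proof -
  have "(\<Sum>j\<le>m. f j) - (\<Sum>k\<le>n. w k * (\<Sum>j\<le>k. f j)) = (\<Sum>k\<le>n. w k * ((\<Sum>j\<le>m. f j) - (\<Sum>j\<le>k. f j)))"
    using w(2) by (simp add: sum_subtractf right_diff_distrib sum_distrib_right[symmetric])
  also have "\<bar>\<dots>\<bar> \<le> (\<Sum>k\<le>n. \<bar>w k * ((\<Sum>j\<le>m. f j) - (\<Sum>j\<le>k. f j))\<bar>)" by (rule sum_abs)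
  also have "\<dots> \<le> (\<Sum>k\<le>n. w k * (\<Sum>j\<in>{min k m<..max k m}. d j))"
  proof (rule sum_mono)
    fix k
    have "\<bar>(\<Sum>j\<le>m. f j) - (\<Sum>j\<le>k. f j)\<bar> \<le> (\<Sum>j\<in>{min k m<..max k m}. d j)"
      using abs_diff_sums_atMost_le[of f m k] sum_mono[of _ "\<lambda>j. \<bar>f j\<bar>" d] fd by (meson order_trans)
    then show "\<bar>w k * ((\<Sum>j\<le>m. f j) - (\<Sum>j\<le>k. f j))\<bar> \<le> w k * (\<Sum>j\<in>{min k m<..max k m}. d j)"
      using w(1)[of k] by (simp add: abs_mult mult_left_mono)
  qed
  finally show ?thesis .
qed

section \<open>Fuzzy numbers through their endpoint functions\<close>

text \<open>Endpoint functions \<open>\<alpha> \<mapsto> [L \<alpha>, U \<alpha>]\<close> of a fuzzy number on \<open>(0,1]\<close> (Goetschel--Voxman); the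
  third clause is left continuity, which is what lets the supremum formulas defining \<open>fplus\<close>
  and \<open>fscale\<close> reproduce the intended levels.\<close>

definition fuzzy_endpoints :: "(real \<Rightarrow> real) \<Rightarrow> (real \<Rightarrow> real) \<Rightarrow> bool" where
  "fuzzy_endpoints L U \<longleftrightarrow> (\<forall>\<alpha>. 0 < \<alpha> \<and> \<alpha> \<le> 1 \<longrightarrow> L \<alpha> \<le> U \<alpha>)
   \<and> (\<forall>\<alpha> \<beta>. 0 < \<alpha> \<and> \<alpha> \<le> \<beta> \<and> \<beta> \<le> 1 \<longrightarrow> L \<alpha> \<le> L \<beta> \<and> U \<beta> \<le> U \<alpha>)
   \<and> (\<forall>\<alpha> \<epsilon>. 0 < \<alpha> \<and> \<alpha> \<le> 1 \<and> 0 < \<epsilon> \<longrightarrow>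
        (\<exists>\<beta>. 0 < \<beta> \<and> \<beta> < \<alpha> \<and> L \<alpha> - \<epsilon> < L \<beta> \<and> U \<beta> < U \<alpha> + \<epsilon>))
   \<and> bdd_below (L ` {0<..1}) \<and> bdd_above (U ` {0<..1})"

definition has_endpoints :: "(real \<Rightarrow> real) \<Rightarrow> (real \<Rightarrow> real) \<Rightarrow> (real \<Rightarrow> real) \<Rightarrow> bool" where
  "has_endpoints u L U \<longleftrightarrow> fuzzy_endpoints L U \<and> (\<forall>\<alpha>. 0 < \<alpha> \<and> \<alpha> \<le> 1 \<longrightarrow> level u \<alpha> = {L \<alpha>..U \<alpha>})"

lemma level_pos: "0 < \<alpha> \<Longrightarrow> level u \<alpha> = {t. \<alpha> \<le> u t}"
  by (simp add: level_def)

lemma positive_support_eq_Union_levels: "{t. 0 < u t} = (\<Union>\<alpha>\<in>{0<..1}. level u \<alpha>)"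
proof safe
  fix t assume "0 < u t"
  then have "min (u t) 1 \<in> {0<..1}" "t \<in> level u (min (u t) 1)" by (auto simp: level_pos)
  then show "t \<in> (\<Union>\<alpha>\<in>{0<..1}. level u \<alpha>)" by blast
qed (auto simp: level_pos)

lemma mem_level_if_mem_lower_levels:
  assumes "0 < \<alpha>" and "\<forall>\<beta>. 0 < \<beta> \<and> \<beta> < \<alpha> \<longrightarrow> t \<in> level u \<beta>"
  shows "t \<in> level u \<alpha>"
proof (rule ccontr)
  assume "t \<notin> level u \<alpha>"
  then have "u t < \<alpha>" using assms(1) by (simp add: level_pos)
  define \<beta> where "\<beta> = (max (u t) 0 + \<alpha>) / 2"
  have "0 < \<beta>" "\<beta> < \<alpha>" "u t < \<beta>" using \<open>u t < \<alpha>\<close> assms(1) by (auto simp: \<beta>_def)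
  then show False using assms(2)[rule_format, of \<beta>] by (simp add: level_pos)
qed

lemma has_endpoints_lowerE_upperE:
  "has_endpoints u L U \<Longrightarrow> 0 < \<alpha> \<Longrightarrow> \<alpha> \<le> 1 \<Longrightarrow> lowerE u \<alpha> = L \<alpha> \<and> upperE u \<alpha> = U \<alpha>"
  unfolding has_endpoints_def fuzzy_endpoints_def lowerE_def upperE_def by auto

lemma cInf_closure:
  fixes S :: "real set"
  assumes "S \<noteq> {}" "bdd_below S"
  shows "Inf (closure S) = Inf S"
proof (rule cInf_eq_minimum)
  show "Inf S \<in> closure S" using assms by (rule closure_contains_Inf)
  have "closure S \<subseteq> {Inf S..}" using assms by (intro closure_minimal) (auto intro: cInf_lower)
  then show "Inf S \<le> x" if "x \<in> closure S" for x using that by auto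
qed

lemma cSup_closure:
  fixes S :: "real set"
  assumes "S \<noteq> {}" "bdd_above S"
  shows "Sup (closure S) = Sup S"
proof (rule cSup_eq_maximum)
  show "Sup S \<in> closure S" using assms by (rule closure_contains_Sup)
  have "closure S \<subseteq> {..Sup S}" using assms by (intro closure_minimal) (auto intro: cSup_upper)
  then show "x \<le> Sup S" if "x \<in> closure S" for x using that by auto
qed

lemma has_endpoints_level0:
  assumes h: "has_endpoints u L U"
  shows "lowerE u 0 = Inf (L ` {0<..1}) \<and> upperE u 0 = Sup (U ` {0<..1})"
proof -
  note h_unfolded = h[unfolded has_endpoints_def fuzzy_endpoints_def]
  define S where "S = (\<Union>\<alpha>\<in>{0<..(1::real)}. {L \<alpha>..U \<alpha>})"
  have supp: "{t. 0 < u t} = S" unfolding positive_support_eq_Union_levels S_def using h_unfolded by auto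
  have endpoints_in_S: "L \<alpha> \<in> S" "U \<alpha> \<in> S" if "\<alpha> \<in> {0<..1}" for \<alpha>
    using h_unfolded that unfolding S_def by auto
  have S_bounds: "Inf (L ` {0<..1}) \<le> x \<and> x \<le> Sup (U ` {0<..1})" if x: "x \<in> S" for x
  proof -
    obtain \<alpha> where \<alpha>: "\<alpha> \<in> {0<..1}" "L \<alpha> \<le> x" "x \<le> U \<alpha>" using x unfolding S_def by auto
    have "Inf (L ` {0<..1}) \<le> L \<alpha>" "U \<alpha> \<le> Sup (U ` {0<..1})"
      using h_unfolded \<alpha>(1) by (auto intro: cInf_lower cSup_upper)
    then show ?thesis using \<alpha> by linarith
  qed
  have ne: "S \<noteq> {}" "{0<..(1::real)} \<noteq> {}" using endpoints_in_S[of 1] by auto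
  have bdd: "bdd_below S" "bdd_above S"
    using S_bounds by (meson bdd_belowI bdd_aboveI)+
  have "Inf S = Inf (L ` {0<..1})"
  proof (rule antisym)
    show "Inf S \<le> Inf (L ` {0<..1})"
      using ne bdd endpoints_in_S by (intro cINF_greatest) (auto intro: cInf_lower)
    show "Inf (L ` {0<..1}) \<le> Inf S" using ne S_bounds by (intro cInf_greatest) auto
  qed
  moreover have "Sup S = Sup (U ` {0<..1})"
  proof (rule antisym)
    show "Sup (U ` {0<..1}) \<le> Sup S"
      using ne bdd endpoints_in_S by (intro cSUP_least) (auto intro: cSup_upper)
    show "Sup S \<le> Sup (U ` {0<..1})" using ne S_bounds by (intro cSup_least) auto
  qed
  ultimately show ?thesis
    using cInf_closure[OF ne(1) bdd(1)] cSup_closure[OF ne(1) bdd(2)]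
    by (simp add: lowerE_def upperE_def level_def supp)
qed

lemma has_endpoints_bounded:
  assumes h: "has_endpoints u L U"
  obtains B where "\<forall>\<alpha>\<in>{0..1}. \<bar>lowerE u \<alpha>\<bar> \<le> B \<and> \<bar>upperE u \<alpha>\<bar> \<le> B"
proof
  note h_unfolded = h[unfolded has_endpoints_def fuzzy_endpoints_def]
  define I where "I = Inf (L ` {0<..1})"
  define M where "M = Sup (U ` {0<..1})"
  have IL: "I \<le> L \<alpha>" and MU: "U \<alpha> \<le> M" and LU: "L \<alpha> \<le> U \<alpha>" if "\<alpha> \<in> {0<..1}" for \<alpha>
    unfolding I_def M_def using h_unfolded that by (auto intro: cInf_lower cSup_upper)
  show "\<forall>\<alpha>\<in>{0..1}. \<bar>lowerE u \<alpha>\<bar> \<le> \<bar>I\<bar> + \<bar>M\<bar> \<and> \<bar>upperE u \<alpha>\<bar> \<le> \<bar>I\<bar> + \<bar>M\<bar>"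
  proof
    fix \<alpha> :: real assume a: "\<alpha> \<in> {0..1}"
    show "\<bar>lowerE u \<alpha>\<bar> \<le> \<bar>I\<bar> + \<bar>M\<bar> \<and> \<bar>upperE u \<alpha>\<bar> \<le> \<bar>I\<bar> + \<bar>M\<bar>"
    proof (cases "\<alpha> = 0")
      case True
      have "I \<le> M" using IL[of 1] MU[of 1] LU[of 1] by auto
      then show ?thesis using True has_endpoints_level0[OF h] by (simp add: I_def[symmetric] M_def[symmetric])
    next
      case False
      then have "\<alpha> \<in> {0<..1}" using a by auto
      then show ?thesis using has_endpoints_lowerE_upperE[OF h] IL MU LU by fastforce
    qed
  qed
qed

lemma fuzzy_endpoints_outside_lower_level:
  assumes h: "fuzzy_endpoints L U" and a: "0 < \<alpha>" "\<alpha> \<le> 1" and t: "t \<notin> {L \<alpha>..U \<alpha>}"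
  shows "\<exists>\<beta>. 0 < \<beta> \<and> \<beta> < \<alpha> \<and> (t < L \<beta> \<or> U \<beta> < t)"
proof -
  note h_unfolded = h[unfolded fuzzy_endpoints_def]
  consider "t < L \<alpha>" | "U \<alpha> < t" using t by fastforce
  then show ?thesis
  proof cases
    case 1
    then obtain \<beta> where "0 < \<beta>" "\<beta> < \<alpha>" "L \<alpha> - (L \<alpha> - t) < L \<beta>"
      using h_unfolded a by (meson diff_gt_0_iff_gt)
    then show ?thesis by auto
  next
    case 2
    then obtain \<beta> where "0 < \<beta>" "\<beta> < \<alpha>" "U \<beta> < U \<alpha> + (t - U \<alpha>)"
      using h_unfolded a by (meson diff_gt_0_iff_gt)
    then show ?thesis by auto
  qed
qed

lemma level_Sup_construction:
  assumes h: "fuzzy_endpoints L U" and a: "0 < \<alpha>" "\<alpha> \<le> 1"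
    and w: "\<And>t. w t = Sup ({0} \<union> {\<beta>. 0 < \<beta> \<and> \<beta> \<le> 1 \<and> L \<beta> \<le> t \<and> t \<le> U \<beta>})"
  shows "level w \<alpha> = {L \<alpha>..U \<alpha>}"
proof (intro set_eqI iffI)
  note h_unfolded = h[unfolded fuzzy_endpoints_def]
  have bdd: "bdd_above ({0} \<union> {\<beta>. 0 < \<beta> \<and> \<beta> \<le> 1 \<and> L \<beta> \<le> t \<and> t \<le> U \<beta>})" for t
    by (rule bdd_aboveI[of _ 1]) auto
  fix t
  show "t \<in> level w \<alpha>" if "t \<in> {L \<alpha>..U \<alpha>}"
  proof -
    have "\<alpha> \<le> w t" unfolding w using that a by (intro cSup_upper[OF _ bdd]) auto
    then show ?thesis using a by (simp add: level_pos)
  qed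
  show "t \<in> {L \<alpha>..U \<alpha>}" if t: "t \<in> level w \<alpha>"
  proof (rule ccontr)
    assume "t \<notin> {L \<alpha>..U \<alpha>}"
    then obtain \<beta> where b: "0 < \<beta>" "\<beta> < \<alpha>" "t < L \<beta> \<or> U \<beta> < t"
      using fuzzy_endpoints_outside_lower_level[OF h a] by blast
    have "w t \<le> \<beta>" unfolding w
    proof (rule cSup_least)
      fix \<gamma> assume \<gamma>: "\<gamma> \<in> {0} \<union> {\<beta>. 0 < \<beta> \<and> \<beta> \<le> 1 \<and> L \<beta> \<le> t \<and> t \<le> U \<beta>}"
      show "\<gamma> \<le> \<beta>"
      proof (rule ccontr)
        assume "\<not> \<gamma> \<le> \<beta>"
        then have "0 < \<gamma>" "\<gamma> \<le> 1" "L \<gamma> \<le> t" "t \<le> U \<gamma>" "\<beta> \<le> \<gamma>" using \<gamma> b by auto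
        then have "L \<beta> \<le> L \<gamma>" "U \<gamma> \<le> U \<beta>" using h_unfolded b by blast+
        then show False using b \<open>L \<gamma> \<le> t\<close> \<open>t \<le> U \<gamma>\<close> by linarith
      qed
    qed auto
    then show False using t a b by (simp add: level_pos)
  qed
qed

lemma fuzzy_endpoints_add:
  assumes h1: "fuzzy_endpoints L1 U1" and h2: "fuzzy_endpoints L2 U2"
  shows "fuzzy_endpoints (\<lambda>\<alpha>. L1 \<alpha> + L2 \<alpha>) (\<lambda>\<alpha>. U1 \<alpha> + U2 \<alpha>)"
proof -
  note a = h1[unfolded fuzzy_endpoints_def] and b = h2[unfolded fuzzy_endpoints_def]
  have left_cont: "\<exists>\<beta>. 0 < \<beta> \<and> \<beta> < \<alpha> \<and> L1 \<alpha> + L2 \<alpha> - \<epsilon> < L1 \<beta> + L2 \<beta> \<and> U1 \<beta> + U2 \<beta> < U1 \<alpha> + U2 \<alpha> + \<epsilon>"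
    if al: "0 < \<alpha>" "\<alpha> \<le> 1" and e: "0 < \<epsilon>" for \<alpha> \<epsilon>
  proof -
    obtain \<beta>1 where b1: "0 < \<beta>1" "\<beta>1 < \<alpha>" "L1 \<alpha> - \<epsilon>/2 < L1 \<beta>1" "U1 \<beta>1 < U1 \<alpha> + \<epsilon>/2"
      using a al e by (meson half_gt_zero)
    obtain \<beta>2 where b2: "0 < \<beta>2" "\<beta>2 < \<alpha>" "L2 \<alpha> - \<epsilon>/2 < L2 \<beta>2" "U2 \<beta>2 < U2 \<alpha> + \<epsilon>/2"
      using b al e by (meson half_gt_zero)
    have "L1 \<beta>1 \<le> L1 (max \<beta>1 \<beta>2) \<and> U1 (max \<beta>1 \<beta>2) \<le> U1 \<beta>1"
      "L2 \<beta>2 \<le> L2 (max \<beta>1 \<beta>2) \<and> U2 (max \<beta>1 \<beta>2) \<le> U2 \<beta>2"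
      using a b b1 b2 al by auto
    then show ?thesis using b1 b2 by (intro exI[of _ "max \<beta>1 \<beta>2"]) auto
  qed
  obtain l1 l2 where "\<forall>x\<in>{0<..1}. l1 \<le> L1 x" "\<forall>x\<in>{0<..1}. l2 \<le> L2 x"
    using a b by (auto simp: bdd_below_def)
  then have "bdd_below ((\<lambda>\<alpha>. L1 \<alpha> + L2 \<alpha>) ` {0<..1})"
    by (intro bdd_belowI[of _ "l1 + l2"]) (auto intro: add_mono)
  moreover obtain r1 r2 where "\<forall>x\<in>{0<..1}. U1 x \<le> r1" "\<forall>x\<in>{0<..1}. U2 x \<le> r2"
    using a b by (auto simp: bdd_above_def)
  then have "bdd_above ((\<lambda>\<alpha>. U1 \<alpha> + U2 \<alpha>) ` {0<..1})"
    by (intro bdd_aboveI[of _ "r1 + r2"]) (auto intro: add_mono)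
  ultimately show ?thesis unfolding fuzzy_endpoints_def
    using a b left_cont by (auto intro: add_mono)
qed

lemma fuzzy_endpoints_scale:
  assumes h: "fuzzy_endpoints L U" and c: "0 \<le> c"
  shows "fuzzy_endpoints (\<lambda>\<alpha>. c * L \<alpha>) (\<lambda>\<alpha>. c * U \<alpha>)"
proof (cases "c = 0")
  case True
  then show ?thesis unfolding fuzzy_endpoints_def by (auto intro: exI[of _ "\<alpha>/2" for \<alpha>])
next
  case False
  then have c: "0 < c" using c by simp
  note a = h[unfolded fuzzy_endpoints_def]
  have left_cont: "\<exists>\<beta>. 0 < \<beta> \<and> \<beta> < \<alpha> \<and> c * L \<alpha> - \<epsilon> < c * L \<beta> \<and> c * U \<beta> < c * U \<alpha> + \<epsilon>"
    if al: "0 < \<alpha>" "\<alpha> \<le> 1" and e: "0 < \<epsilon>" for \<alpha> \<epsilon>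
  proof -
    obtain \<beta> where b: "0 < \<beta>" "\<beta> < \<alpha>" "L \<alpha> - \<epsilon>/c < L \<beta>" "U \<beta> < U \<alpha> + \<epsilon>/c"
      using a al e c by (meson divide_pos_pos)
    have "c * (L \<alpha> - \<epsilon>/c) < c * L \<beta>" "c * U \<beta> < c * (U \<alpha> + \<epsilon>/c)"
      using b c by (auto intro: mult_strict_left_mono)
    then show ?thesis using b c by (intro exI[of _ \<beta>]) (auto simp: algebra_simps)
  qed
  obtain l r where "\<forall>x\<in>{0<..1}. l \<le> L x" "\<forall>x\<in>{0<..1}. U x \<le> r"
    using a by (auto simp: bdd_below_def bdd_above_def)
  then have "bdd_below ((\<lambda>\<alpha>. c * L \<alpha>) ` {0<..1})" "bdd_above ((\<lambda>\<alpha>. c * U \<alpha>) ` {0<..1})"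
    using c by (auto intro!: bdd_belowI[of _ "c * l"] bdd_aboveI[of _ "c * r"] intro: mult_left_mono)
  then show ?thesis unfolding fuzzy_endpoints_def
    using a left_cont c by (auto intro: mult_left_mono)
qed

lemma has_endpoints_fplus:
  assumes h1: "has_endpoints u L1 U1" and h2: "has_endpoints v L2 U2"
  shows "has_endpoints (fplus u v) (\<lambda>\<alpha>. L1 \<alpha> + L2 \<alpha>) (\<lambda>\<alpha>. U1 \<alpha> + U2 \<alpha>)"
proof -
  have LU: "fuzzy_endpoints (\<lambda>\<alpha>. L1 \<alpha> + L2 \<alpha>) (\<lambda>\<alpha>. U1 \<alpha> + U2 \<alpha>)"
    using fuzzy_endpoints_add h1 h2 unfolding has_endpoints_def by blast
  have "{\<alpha>. 0 < \<alpha> \<and> \<alpha> \<le> 1 \<and> (\<exists>a b. a \<in> level u \<alpha> \<and> b \<in> level v \<alpha> \<and> t = a + b)}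
      = {\<beta>. 0 < \<beta> \<and> \<beta> \<le> 1 \<and> L1 \<beta> + L2 \<beta> \<le> t \<and> t \<le> U1 \<beta> + U2 \<beta>}" for t
  proof (intro set_eqI iffI)
    fix \<alpha> assume "\<alpha> \<in> {\<alpha>. 0 < \<alpha> \<and> \<alpha> \<le> 1 \<and> (\<exists>a b. a \<in> level u \<alpha> \<and> b \<in> level v \<alpha> \<and> t = a + b)}"
    then show "\<alpha> \<in> {\<beta>. 0 < \<beta> \<and> \<beta> \<le> 1 \<and> L1 \<beta> + L2 \<beta> \<le> t \<and> t \<le> U1 \<beta> + U2 \<beta>}"
      using h1 h2 unfolding has_endpoints_def by auto
  next
    fix \<alpha> assume al: "\<alpha> \<in> {\<beta>. 0 < \<beta> \<and> \<beta> \<le> 1 \<and> L1 \<beta> + L2 \<beta> \<le> t \<and> t \<le> U1 \<beta> + U2 \<beta>}"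
    have "L1 \<alpha> \<le> U1 \<alpha>" "L2 \<alpha> \<le> U2 \<alpha>"
      using h1 h2 al unfolding has_endpoints_def fuzzy_endpoints_def by auto
    then have "max (L1 \<alpha>) (t - U2 \<alpha>) \<in> level u \<alpha>" "t - max (L1 \<alpha>) (t - U2 \<alpha>) \<in> level v \<alpha>"
      using h1 h2 al unfolding has_endpoints_def by auto
    then show "\<alpha> \<in> {\<alpha>. 0 < \<alpha> \<and> \<alpha> \<le> 1 \<and> (\<exists>a b. a \<in> level u \<alpha> \<and> b \<in> level v \<alpha> \<and> t = a + b)}"
      using al by force
  qed
  then have "fplus u v t = Sup ({0} \<union> {\<beta>. 0 < \<beta> \<and> \<beta> \<le> 1 \<and> L1 \<beta> + L2 \<beta> \<le> t \<and> t \<le> U1 \<beta> + U2 \<beta>})" for t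
    unfolding fplus_def by simp
  then show ?thesis unfolding has_endpoints_def using LU level_Sup_construction[OF LU] by blast
qed

lemma has_endpoints_fscale:
  assumes h: "has_endpoints u L U" and c: "0 \<le> c"
  shows "has_endpoints (fscale c u) (\<lambda>\<alpha>. c * L \<alpha>) (\<lambda>\<alpha>. c * U \<alpha>)"
proof -
  have LU: "fuzzy_endpoints (\<lambda>\<alpha>. c * L \<alpha>) (\<lambda>\<alpha>. c * U \<alpha>)"
    using fuzzy_endpoints_scale h c unfolding has_endpoints_def by blast
  have "{\<alpha>. 0 < \<alpha> \<and> \<alpha> \<le> 1 \<and> (\<exists>a. a \<in> level u \<alpha> \<and> t = c * a)}
      = {\<beta>. 0 < \<beta> \<and> \<beta> \<le> 1 \<and> c * L \<beta> \<le> t \<and> t \<le> c * U \<beta>}" for t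
  proof (intro set_eqI iffI)
    fix \<alpha> assume "\<alpha> \<in> {\<alpha>. 0 < \<alpha> \<and> \<alpha> \<le> 1 \<and> (\<exists>a. a \<in> level u \<alpha> \<and> t = c * a)}"
    then show "\<alpha> \<in> {\<beta>. 0 < \<beta> \<and> \<beta> \<le> 1 \<and> c * L \<beta> \<le> t \<and> t \<le> c * U \<beta>}"
      using h c unfolding has_endpoints_def by (auto intro: mult_left_mono)
  next
    fix \<alpha> assume al: "\<alpha> \<in> {\<beta>. 0 < \<beta> \<and> \<beta> \<le> 1 \<and> c * L \<beta> \<le> t \<and> t \<le> c * U \<beta>}"
    have LUa: "L \<alpha> \<le> U \<alpha>" and lev: "level u \<alpha> = {L \<alpha>..U \<alpha>}"
      using h al unfolding has_endpoints_def fuzzy_endpoints_def by auto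
    have "\<exists>a. a \<in> level u \<alpha> \<and> t = c * a"
    proof (cases "c = 0")
      case True
      then show ?thesis using al LUa lev by (intro exI[of _ "L \<alpha>"]) auto
    next
      case False
      then have "0 < c" using c by simp
      then show ?thesis using al lev by (intro exI[of _ "t / c"]) (auto simp: field_simps)
    qed
    then show "\<alpha> \<in> {\<alpha>. 0 < \<alpha> \<and> \<alpha> \<le> 1 \<and> (\<exists>a. a \<in> level u \<alpha> \<and> t = c * a)}"
      using al by blast
  qed
  then have "fscale c u t = Sup ({0} \<union> {\<beta>. 0 < \<beta> \<and> \<beta> \<le> 1 \<and> c * L \<beta> \<le> t \<and> t \<le> c * U \<beta>})" for t
    unfolding fscale_def by simp
  then show ?thesis unfolding has_endpoints_def using LU level_Sup_construction[OF LU] by blast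
qed

lemma has_endpoints_fsum_upto:
  assumes "\<forall>k\<le>n. has_endpoints (w k) (L k) (U k)"
  shows "has_endpoints (fsum_upto w n) (\<lambda>\<alpha>. \<Sum>k\<le>n. L k \<alpha>) (\<lambda>\<alpha>. \<Sum>k\<le>n. U k \<alpha>)"
  using assms
proof (induction n)
  case (Suc n)
  then have "has_endpoints (fsum_upto w n) (\<lambda>\<alpha>. \<Sum>k\<le>n. L k \<alpha>) (\<lambda>\<alpha>. \<Sum>k\<le>n. U k \<alpha>)" by simp
  from has_endpoints_fplus[OF this, of "w (Suc n)" "L (Suc n)" "U (Suc n)"] Suc.prems
  show ?case by simp
qed simp

lemma has_endpoints_fzero: "has_endpoints fzero (\<lambda>_. 0) (\<lambda>_. 0)"
  unfolding has_endpoints_def fuzzy_endpoints_def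
  by (auto simp: level_pos fzero_def intro: exI[of _ "\<alpha>/2" for \<alpha>] split: if_splits)

lemma E1_level_closed:
  assumes u: "u \<in> E1" and a: "0 < \<alpha>"
  shows "closed (level u \<alpha>)"
proof -
  have usc: "\<forall>x \<epsilon>. 0 < \<epsilon> \<longrightarrow> (\<exists>\<delta>>0. \<forall>y. \<bar>y - x\<bar> < \<delta> \<longrightarrow> u y < u x + \<epsilon>)"
    using u by (simp add: E1_def)
  have "open {t. u t < \<alpha>}" unfolding open_real
  proof
    fix x assume "x \<in> {t. u t < \<alpha>}"
    then obtain \<delta> where "0 < \<delta>" "\<forall>y. \<bar>y - x\<bar> < \<delta> \<longrightarrow> u y < u x + (\<alpha> - u x)"
      using usc by (metis diff_gt_0_iff_gt mem_Collect_eq)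
    then show "\<exists>\<epsilon>>0. \<forall>x'. \<bar>x' - x\<bar> < \<epsilon> \<longrightarrow> x' \<in> {t. u t < \<alpha>}" by auto
  qed
  moreover have "level u \<alpha> = - {t. u t < \<alpha>}" using a by (auto simp: level_pos)
  ultimately show ?thesis by (simp add: closed_def)
qed

lemma E1_level_convex:
  assumes u: "u \<in> E1" and a: "0 < \<alpha>"
  shows "convex (level u \<alpha>)"
  unfolding convex_alt
proof (intro ballI allI impI)
  fix x y and c :: real assume xy: "x \<in> level u \<alpha>" "y \<in> level u \<alpha>" and c: "0 \<le> c \<and> c \<le> 1"
  have "min (u y) (u x) \<le> u (c * y + (1 - c) * x)" using u c by (simp add: E1_def)
  then have "\<alpha> \<le> u ((1 - c) * x + c * y)" using xy a by (simp add: level_pos add.commute)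
  then show "(1 - c) *\<^sub>R x + c *\<^sub>R y \<in> level u \<alpha>" using a by (simp add: level_pos)
qed

lemma E1_level_interval:
  assumes u: "u \<in> E1" and a: "0 < \<alpha>" "\<alpha> \<le> 1"
  shows "level u \<alpha> = {lowerE u \<alpha>..upperE u \<alpha>} \<and> lowerE u \<alpha> \<le> upperE u \<alpha>"
proof -
  obtain t0 where "u t0 = 1" using u by (auto simp: E1_def)
  then have "t0 \<in> level u \<alpha>" using a by (simp add: level_pos)
  then have ne: "level u \<alpha> \<noteq> {}" by auto
  have sub: "level u \<alpha> \<subseteq> closure {t. 0 < u t}" using a closure_subset by (fastforce simp: level_pos)
  have "bounded (level u \<alpha>)"
    using u sub compact_imp_bounded bounded_subset unfolding E1_def by blast
  then have "compact (level u \<alpha>)" using E1_level_closed[OF u a(1)] by (simp add: compact_eq_bounded_closed)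
  moreover have "connected (level u \<alpha>)" using E1_level_convex[OF u a(1)] by (simp add: convex_connected)
  ultimately obtain lo hi where "level u \<alpha> = {lo..hi}" using connected_compact_interval_1 by blast
  with ne show ?thesis by (simp add: lowerE_def upperE_def)
qed

lemma E1_endpoints_mono:
  assumes u: "u \<in> E1" and "0 < \<alpha>" "\<alpha> \<le> \<beta>" "\<beta> \<le> 1"
  shows "lowerE u \<alpha> \<le> lowerE u \<beta> \<and> upperE u \<beta> \<le> upperE u \<alpha>"
proof -
  have "level u \<beta> \<subseteq> level u \<alpha>" using assms by (auto simp: level_pos)
  then show ?thesis using E1_level_interval[OF u, of \<alpha>] E1_level_interval[OF u, of \<beta>] assms by auto
qed

lemma E1_endpoints_left_continuous:
  assumes u: "u \<in> E1" and al: "0 < \<alpha>" "\<alpha> \<le> 1" and e: "0 < \<epsilon>"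
  shows "\<exists>\<beta>. 0 < \<beta> \<and> \<beta> < \<alpha> \<and> lowerE u \<alpha> - \<epsilon> < lowerE u \<beta> \<and> upperE u \<beta> < upperE u \<alpha> + \<epsilon>"
proof -
  note I = E1_level_interval[OF u] and mono = E1_endpoints_mono[OF u]
  have "\<exists>\<beta>. 0 < \<beta> \<and> \<beta> < \<alpha> \<and> lowerE u \<alpha> - \<epsilon> < lowerE u \<beta>"
  proof (rule ccontr)
    assume none: "\<not> ?thesis"
    have "lowerE u \<alpha> - \<epsilon> \<in> level u \<alpha>"
    proof (rule mem_level_if_mem_lower_levels[OF al(1)], intro allI impI)
      fix \<beta> assume b: "0 < \<beta> \<and> \<beta> < \<alpha>"
      then have "lowerE u \<beta> \<le> lowerE u \<alpha> - \<epsilon>" using none by (meson not_le)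
      then show "lowerE u \<alpha> - \<epsilon> \<in> level u \<beta>"
        using I[of \<beta>] I[OF al] mono[of \<beta> \<alpha>] b al e by auto
    qed
    then show False using I[OF al] e by auto
  qed
  then obtain \<beta>1 where b1: "0 < \<beta>1" "\<beta>1 < \<alpha>" "lowerE u \<alpha> - \<epsilon> < lowerE u \<beta>1" by blast
  have "\<exists>\<beta>. 0 < \<beta> \<and> \<beta> < \<alpha> \<and> upperE u \<beta> < upperE u \<alpha> + \<epsilon>"
  proof (rule ccontr)
    assume none: "\<not> ?thesis"
    have "upperE u \<alpha> + \<epsilon> \<in> level u \<alpha>"
    proof (rule mem_level_if_mem_lower_levels[OF al(1)], intro allI impI)
      fix \<beta> assume b: "0 < \<beta> \<and> \<beta> < \<alpha>"
      then have "upperE u \<alpha> + \<epsilon> \<le> upperE u \<beta>" using none by (meson not_le)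
      then show "upperE u \<alpha> + \<epsilon> \<in> level u \<beta>"
        using I[of \<beta>] I[OF al] mono[of \<beta> \<alpha>] b al e by auto
    qed
    then show False using I[OF al] e by auto
  qed
  then obtain \<beta>2 where b2: "0 < \<beta>2" "\<beta>2 < \<alpha>" "upperE u \<beta>2 < upperE u \<alpha> + \<epsilon>" by blast
  have "lowerE u \<beta>1 \<le> lowerE u (max \<beta>1 \<beta>2)" "upperE u (max \<beta>1 \<beta>2) \<le> upperE u \<beta>2"
    using mono[of \<beta>1 "max \<beta>1 \<beta>2"] mono[of \<beta>2 "max \<beta>1 \<beta>2"] b1 b2 al by auto
  then show ?thesis using b1 b2 by (intro exI[of _ "max \<beta>1 \<beta>2"]) auto
qed

lemma E1_has_endpoints:
  assumes u: "u \<in> E1"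
  shows "has_endpoints u (lowerE u) (upperE u)"
proof -
  have "bounded (closure {t. 0 < u t})" using u by (simp add: E1_def compact_imp_bounded)
  then obtain K where K: "\<forall>x\<in>closure {t. 0 < u t}. \<bar>x\<bar> \<le> K" unfolding bounded_real by blast
  have bound: "\<bar>lowerE u \<alpha>\<bar> \<le> K \<and> \<bar>upperE u \<alpha>\<bar> \<le> K" if "\<alpha> \<in> {0<..1}" for \<alpha>
  proof -
    have "level u \<alpha> \<subseteq> closure {t. 0 < u t}" using that closure_subset by (fastforce simp: level_pos)
    then show ?thesis using E1_level_interval[OF u, of \<alpha>] that K by auto
  qed
  have "bdd_below (lowerE u ` {0<..1})"
    by (rule bdd_belowI2[where m="-K"]) (use bound in fastforce)
  moreover have "bdd_above (upperE u ` {0<..1})"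
    by (rule bdd_aboveI2[where M=K]) (use bound in fastforce)
  ultimately show ?thesis unfolding has_endpoints_def fuzzy_endpoints_def
  proof (intro conjI allI impI)
    fix \<alpha> :: real assume "0 < \<alpha> \<and> \<alpha> \<le> 1"
    then show "lowerE u \<alpha> \<le> upperE u \<alpha>" "level u \<alpha> = {lowerE u \<alpha>..upperE u \<alpha>}"
      using E1_level_interval[OF u] by auto
  next
    fix \<alpha> \<beta> :: real assume "0 < \<alpha> \<and> \<alpha> \<le> \<beta> \<and> \<beta> \<le> 1"
    then show "lowerE u \<alpha> \<le> lowerE u \<beta>" "upperE u \<beta> \<le> upperE u \<alpha>"
      using E1_endpoints_mono[OF u] by auto
  next
    fix \<alpha> \<epsilon> :: real assume "0 < \<alpha> \<and> \<alpha> \<le> 1 \<and> 0 < \<epsilon>"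
    then show "\<exists>\<beta>>0. \<beta> < \<alpha> \<and> lowerE u \<alpha> - \<epsilon> < lowerE u \<beta> \<and> upperE u \<beta> < upperE u \<alpha> + \<epsilon>"
      using E1_endpoints_left_continuous[OF u] by auto
  qed
qed

section \<open>The metric \<open>D\<close> through endpoints\<close>

lemma abs_cINF_diff_le:
  fixes f g :: "real \<Rightarrow> real"
  assumes ne: "A \<noteq> {}" and bf: "bdd_below (f ` A)" and bg: "bdd_below (g ` A)"
    and d: "\<forall>a\<in>A. \<bar>f a - g a\<bar> \<le> b"
  shows "\<bar>Inf (f ` A) - Inf (g ` A)\<bar> \<le> b"
proof -
  have "Inf (f ` A) - b \<le> Inf (g ` A)"
  proof (rule cINF_greatest[OF ne])
    fix a assume a: "a \<in> A"
    then have "Inf (f ` A) \<le> f a" using bf by (intro cINF_lower)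
    then show "Inf (f ` A) - b \<le> g a" using d a by force
  qed
  moreover have "Inf (g ` A) - b \<le> Inf (f ` A)"
  proof (rule cINF_greatest[OF ne])
    fix a assume a: "a \<in> A"
    then have "Inf (g ` A) \<le> g a" using bg by (intro cINF_lower)
    then show "Inf (g ` A) - b \<le> f a" using d a by force
  qed
  ultimately show ?thesis by linarith
qed

lemma abs_cSUP_diff_le:
  fixes f g :: "real \<Rightarrow> real"
  assumes ne: "A \<noteq> {}" and bf: "bdd_above (f ` A)" and bg: "bdd_above (g ` A)"
    and d: "\<forall>a\<in>A. \<bar>f a - g a\<bar> \<le> b"
  shows "\<bar>Sup (f ` A) - Sup (g ` A)\<bar> \<le> b"
proof -
  have "Sup (f ` A) \<le> Sup (g ` A) + b"
  proof (rule cSUP_least[OF ne])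
    fix a assume a: "a \<in> A"
    then have "g a \<le> Sup (g ` A)" using bg by (intro cSUP_upper)
    then show "f a \<le> Sup (g ` A) + b" using d a by force
  qed
  moreover have "Sup (g ` A) \<le> Sup (f ` A) + b"
  proof (rule cSUP_least[OF ne])
    fix a assume a: "a \<in> A"
    then have "f a \<le> Sup (f ` A)" using bf by (intro cSUP_upper)
    then show "g a \<le> Sup (f ` A) + b" using d a by force
  qed
  ultimately show ?thesis by linarith
qed

lemma endpoint_dist_le_fdist:
  assumes hx: "has_endpoints x Lx Ux" and hy: "has_endpoints y Ly Uy" and a: "0 < \<alpha>" "\<alpha> \<le> 1"
  shows "\<bar>Lx \<alpha> - Ly \<alpha>\<bar> \<le> fdist x y \<and> \<bar>Ux \<alpha> - Uy \<alpha>\<bar> \<le> fdist x y"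
proof -
  obtain Bx where Bx: "\<forall>\<alpha>\<in>{0..1}. \<bar>lowerE x \<alpha>\<bar> \<le> Bx \<and> \<bar>upperE x \<alpha>\<bar> \<le> Bx"
    using has_endpoints_bounded[OF hx] .
  obtain By where By: "\<forall>\<alpha>\<in>{0..1}. \<bar>lowerE y \<alpha>\<bar> \<le> By \<and> \<bar>upperE y \<alpha>\<bar> \<le> By"
    using has_endpoints_bounded[OF hy] .
  have "bdd_above ((\<lambda>\<alpha>. max \<bar>lowerE x \<alpha> - lowerE y \<alpha>\<bar> \<bar>upperE x \<alpha> - upperE y \<alpha>\<bar>) ` {0..1})"
    by (rule bdd_aboveI2[where M="Bx + By"]) (use Bx By in fastforce)
  then have "max \<bar>lowerE x \<alpha> - lowerE y \<alpha>\<bar> \<bar>upperE x \<alpha> - upperE y \<alpha>\<bar> \<le> fdist x y"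
    unfolding fdist_def using a by (intro cSUP_upper) auto
  then show ?thesis using has_endpoints_lowerE_upperE[OF hx a] has_endpoints_lowerE_upperE[OF hy a] by auto
qed

lemma fdist_le_endpoint_bound:
  assumes hx: "has_endpoints x Lx Ux" and hy: "has_endpoints y Ly Uy"
    and d: "\<forall>\<alpha>. 0 < \<alpha> \<and> \<alpha> \<le> 1 \<longrightarrow> \<bar>Lx \<alpha> - Ly \<alpha>\<bar> \<le> b \<and> \<bar>Ux \<alpha> - Uy \<alpha>\<bar> \<le> b"
  shows "fdist x y \<le> b"
  unfolding fdist_def
proof (rule cSUP_least)
  fix \<alpha> :: real assume a: "\<alpha> \<in> {0..1}"
  show "max \<bar>lowerE x \<alpha> - lowerE y \<alpha>\<bar> \<bar>upperE x \<alpha> - upperE y \<alpha>\<bar> \<le> b"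
  proof (cases "\<alpha> = 0")
    case True
    note x = hx[unfolded has_endpoints_def fuzzy_endpoints_def]
      and y = hy[unfolded has_endpoints_def fuzzy_endpoints_def]
    have "\<bar>Inf (Lx ` {0<..1}) - Inf (Ly ` {0<..1})\<bar> \<le> b"
      using x y d by (intro abs_cINF_diff_le) auto
    moreover have "\<bar>Sup (Ux ` {0<..1}) - Sup (Uy ` {0<..1})\<bar> \<le> b"
      using x y d by (intro abs_cSUP_diff_le) auto
    ultimately show ?thesis using has_endpoints_level0[OF hx] has_endpoints_level0[OF hy] True by simp
  next
    case False
    then show ?thesis using a has_endpoints_lowerE_upperE[OF hx] has_endpoints_lowerE_upperE[OF hy] d by auto
  qed
qed auto

lemma fdist_nonneg: "has_endpoints x Lx Ux \<Longrightarrow> has_endpoints y Ly Uy \<Longrightarrow> 0 \<le> fdist x y"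
  using endpoint_dist_le_fdist[of x Lx Ux y Ly Uy 1] by (meson abs_ge_zero order_trans order_refl zero_less_one)

lemma fdist_triangle:
  assumes hx: "has_endpoints x Lx Ux" and hy: "has_endpoints y Ly Uy" and hz: "has_endpoints z Lz Uz"
  shows "fdist x z \<le> fdist x y + fdist y z"
proof (rule fdist_le_endpoint_bound[OF hx hz], intro allI impI)
  fix \<alpha> :: real assume "0 < \<alpha> \<and> \<alpha> \<le> 1"
  then show "\<bar>Lx \<alpha> - Lz \<alpha>\<bar> \<le> fdist x y + fdist y z \<and> \<bar>Ux \<alpha> - Uz \<alpha>\<bar> \<le> fdist x y + fdist y z"
    using endpoint_dist_le_fdist[OF hx hy, of \<alpha>] endpoint_dist_le_fdist[OF hy hz, of \<alpha>]
    by (auto simp: abs_le_iff)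
qed

section \<open>Partial sums and Euler means\<close>

lemma psum_has_endpoints:
  assumes "\<forall>j. u j \<in> E1"
  shows "has_endpoints (psum u m) (\<lambda>\<alpha>. \<Sum>j\<le>m. lowerE (u j) \<alpha>) (\<lambda>\<alpha>. \<Sum>j\<le>m. upperE (u j) \<alpha>)"
  unfolding psum_def using assms E1_has_endpoints by (intro has_endpoints_fsum_upto) blast

lemma euler_mean_has_endpoints:
  assumes p: "0 \<le> p" and u: "\<forall>j. u j \<in> E1"
  shows "has_endpoints (euler_mean p (psum u) n)
    (\<lambda>\<alpha>. \<Sum>k\<le>n. euler_weight p n k * (\<Sum>j\<le>k. lowerE (u j) \<alpha>))
    (\<lambda>\<alpha>. \<Sum>k\<le>n. euler_weight p n k * (\<Sum>j\<le>k. upperE (u j) \<alpha>))"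
  unfolding euler_mean_def
proof (intro has_endpoints_fsum_upto allI impI)
  fix k
  show "has_endpoints (fscale (real (n choose k) * p ^ (n - k) / (p + 1) ^ n) (psum u k))
      (\<lambda>\<alpha>. euler_weight p n k * (\<Sum>j\<le>k. lowerE (u j) \<alpha>)) (\<lambda>\<alpha>. euler_weight p n k * (\<Sum>j\<le>k. upperE (u j) \<alpha>))"
    using has_endpoints_fscale[OF psum_has_endpoints[OF u] euler_weight_nonneg[OF p]]
    by (simp add: euler_weight_def)
qed

lemma fdist_psum_euler_mean_le:
  assumes p: "0 \<le> p" and u: "\<forall>j. u j \<in> E1"
  shows "fdist (psum u m) (euler_mean p (psum u) n)
    \<le> (\<Sum>k\<le>n. euler_weight p n k * (\<Sum>j\<in>{min k m<..max k m}. fdist (u j) fzero))"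
proof (rule fdist_le_endpoint_bound[OF psum_has_endpoints[OF u] euler_mean_has_endpoints[OF p u]],
    intro allI impI conjI)
  fix \<alpha> :: real assume a: "0 < \<alpha> \<and> \<alpha> \<le> 1"
  have d: "\<bar>lowerE (u j) \<alpha>\<bar> \<le> fdist (u j) fzero" "\<bar>upperE (u j) \<alpha>\<bar> \<le> fdist (u j) fzero" for j
    using endpoint_dist_le_fdist[OF E1_has_endpoints has_endpoints_fzero, of "u j" \<alpha>] u a by simp_all
  note bound = abs_partial_sum_minus_weighted_le[of "euler_weight p n", OF euler_weight_nonneg[OF p]
      euler_weight_sum[OF p]]
  show "\<bar>(\<Sum>j\<le>m. lowerE (u j) \<alpha>) - (\<Sum>k\<le>n. euler_weight p n k * (\<Sum>j\<le>k. lowerE (u j) \<alpha>))\<bar>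
      \<le> (\<Sum>k\<le>n. euler_weight p n k * (\<Sum>j\<in>{min k m<..max k m}. fdist (u j) fzero))"
    by (rule bound) (rule d)
  show "\<bar>(\<Sum>j\<le>m. upperE (u j) \<alpha>) - (\<Sum>k\<le>n. euler_weight p n k * (\<Sum>j\<le>k. upperE (u j) \<alpha>))\<bar>
      \<le> (\<Sum>k\<le>n. euler_weight p n k * (\<Sum>j\<in>{min k m<..max k m}. fdist (u j) fzero))"
    by (rule bound) (rule d)
qed

lemma fdist_psum_le:
  assumes p: "0 \<le> p" and u: "\<forall>j. u j \<in> E1" and v: "\<nu> \<in> E1"
  shows "fdist (psum u m) \<nu>
    \<le> (\<Sum>k\<le>n. euler_weight p n k * (\<Sum>j\<in>{min k m<..max k m}. fdist (u j) fzero))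
      + fdist (euler_mean p (psum u) n) \<nu>"
  using fdist_triangle[OF psum_has_endpoints[OF u] euler_mean_has_endpoints[OF p u] E1_has_endpoints[OF v]]
    add_right_mono[OF fdist_psum_euler_mean_le[OF p u]]
  by (rule order_trans)

theorem mainTheorem5:
  fixes p :: real and u :: "nat \<Rightarrow> real \<Rightarrow> real" and \<nu> :: "real \<Rightarrow> real"
  assumes "p > 0"
    and "\<forall>n. u n \<in> E1"
    and "\<nu> \<in> E1"
    and "Ep_summable_to p u \<nu>"
    and "(\<lambda>n. sqrt (real n) * fdist (u n) fzero) \<longlonglongrightarrow> 0"
  shows "(\<lambda>n. fdist (psum u n) \<nu>) \<longlonglongrightarrow> 0"
proof -
  have p: "0 \<le> p" using assms(1) by simp
  have "\<forall>j. 0 \<le> fdist (u j) fzero"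
    using fdist_nonneg[OF E1_has_endpoints[OF assms(2)[rule_format]] has_endpoints_fzero] by blast
  note remainder = euler_remainder_tendsto_0[OF p this assms(5)]
  have mean: "(\<lambda>m. fdist (euler_mean p (psum u) (euler_index p m)) \<nu>) \<longlonglongrightarrow> 0"
    using filterlim_compose[OF assms(4)[unfolded Ep_summable_to_def] filterlim_euler_index[OF p]] by simp
  show ?thesis
    by (rule tendsto_sandwich[OF _ _ tendsto_const tendsto_add_zero[OF remainder mean]];
        intro always_eventually allI)
      (simp_all add: fdist_psum_le[OF p assms(2,3)]
        fdist_nonneg[OF psum_has_endpoints[OF assms(2)] E1_has_endpoints[OF assms(3)]])
qed

end
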